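(* Let $K\ge2$, $\sigma^2>0$, $\bm\theta\in\Theta$, and let $(\beta_K,\dots,\beta_2)$ be nonnegative batch weights summing to $1$. For every $n\in\{K,\dots,2\}$, the arm $\ell_n$ eliminated by BAE from the $n$-element candidate set satisfies $$\liminf_{T\to\infty}-\frac1T\ln\mathbb P^{\mathtt{BAE}}_{\bm\theta,T}\big(\ell_n=I^*\big)\ \ge\ w_n\Gamma_{\bm\theta,n}.$$
   Context: Sampling model: $K$ arms with unknown $\bm\theta\in\mathbb{R}^K$; potential outcomes $Y_{t,i}$ independent with $Y_{t,i}\sim\mathcal N(\theta_i,\sigma^2)$, $\sigma^2>0$; only the outcome of the chosen arm is observed. $\Theta$: set of $\bm\theta$ with unique best arm $I^*=\arg\max_i\theta_i$. Batched arm elimination (BAE) with weights $(\beta_K,\dots,\beta_2)$: candidate set $C$ initially $[K]$; $N_{t,i}$ = number of the first $t$ units assigned to arm $i$, $m_{t,i}$ = empirical mean of arm $i$'s observed outcomes among them ($0$ if none). At each $t$ assign $I_t\in\arg\min_{i\in C}N_{t-1,i}$ (ties arbitrary). For $n=K,\dots,2$, at time $T_n=(\beta_K+\dots+\beta_n)T$ (rounded to an integer; $n$ processed in decreasing order), the current candidate set $C_n$ has $n$ elements and an arm $\ell_n\in\arg\min_{i\in C_n}m_{T_n,i}$ is removed. $w_n=\sum_{k=n}^{K}\beta_k/k$. $\mathcal J_{\bm\theta,n}=\{J\subseteq[K]:|J|=n,\ I^*\in J\}$, $\Lambda_{\bm\theta,J}=\{\bm\lambda\in\mathbb R^K:\lambda_{I^*}\le\min_{i\in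 J}\lambda_i\}$, $\Gamma_{\bm\theta,n}=\min_{J\in\mathcal J_{\bm\theta,n}}\inf_{\bm\lambda\in\Lambda_{\bm\theta,J}}\sum_{i\in J}\frac{(\lambda_i-\theta_i)^2}{2\sigma^2}$. *)

theory Defs
  imports "HOL-Probability.Probability"
begin

(* Arms are 1..K, units (time steps) are 1..T.
   A history h is the list of arms assigned to units 1..length h. *)

definition cnt :: "nat list \<Rightarrow> nat \<Rightarrow> nat" where
  "cnt h i = length (filter (\<lambda>a. a = i) h)"

(* empirical mean of arm i's observed outcomes (0 if none); Y (t,i) = potential outcome *)
definition emp_mean :: "(nat \<times> nat \<Rightarrow> real) \<Rightarrow> nat list \<Rightarrow> nat \<Rightarrow> real" where
  "emp_mean Y h i = (if cnt h i = 0 then 0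
     else (\<Sum>s\<in>{s. s < length h \<and> h ! s = i}. Y (Suc s, i)) / real (cnt h i))"

definition bae_time :: "nat \<Rightarrow> (nat \<Rightarrow> real) \<Rightarrow> nat \<Rightarrow> nat \<Rightarrow> nat" where
  "bae_time K \<beta> T n = nat (round ((\<Sum>k=n..K. \<beta> k) * real T))"

definition valid_tiebreak :: "(nat list \<Rightarrow> nat set \<Rightarrow> nat) \<Rightarrow> bool" where
  "valid_tiebreak f \<longleftrightarrow> (\<forall>h S. finite S \<and> S \<noteq> {} \<longrightarrow> f h S \<in> S)"

type_synonym bae_state = "nat list \<times> nat set \<times> (nat \<Rightarrow> nat)"
  (* history, candidate set C, eliminated arms (n \<mapsto> \<ell>_n) *)

definition bae_elim :: "nat \<Rightarrow> (nat \<Rightarrow> real) \<Rightarrow> nat \<Rightarrow> (nat list \<Rightarrow> nat set \<Rightarrow> nat)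
    \<Rightarrow> (nat \<times> nat \<Rightarrow> real) \<Rightarrow> nat \<Rightarrow> bae_state \<Rightarrow> bae_state" where
  "bae_elim K \<beta> T eb Y t st =
     foldl (\<lambda>(h, C, L) n.
        if bae_time K \<beta> T n = t then
          (let l = eb h {i \<in> C. emp_mean Y h i = Min (emp_mean Y h ` C)}
           in (h, C - {l}, L(n := l)))
        else (h, C, L)) st (rev [2..<Suc K])"

(* state of BAE after the first t units (and the eliminations at time t) *)
fun bae_run :: "nat \<Rightarrow> (nat \<Rightarrow> real) \<Rightarrow> nat \<Rightarrow> (nat list \<Rightarrow> nat set \<Rightarrow> nat)
    \<Rightarrow> (nat list \<Rightarrow> nat set \<Rightarrow> nat) \<Rightarrow> (nat \<times> nat \<Rightarrow> real) \<Rightarrow> nat \<Rightarrow> bae_state" where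
  "bae_run K \<beta> T tb eb Y 0 = bae_elim K \<beta> T eb Y 0 ([], {1..K}, \<lambda>_. 0)"
| "bae_run K \<beta> T tb eb Y (Suc t) =
     (case bae_run K \<beta> T tb eb Y t of (h, C, L) \<Rightarrow>
        bae_elim K \<beta> T eb Y (Suc t)
          (h @ [tb h {i \<in> C. cnt h i = Min (cnt h ` C)}], C, L))"

definition bae_eliminated :: "nat \<Rightarrow> (nat \<Rightarrow> real) \<Rightarrow> nat \<Rightarrow> (nat list \<Rightarrow> nat set \<Rightarrow> nat)
    \<Rightarrow> (nat list \<Rightarrow> nat set \<Rightarrow> nat) \<Rightarrow> (nat \<times> nat \<Rightarrow> real) \<Rightarrow> nat \<Rightarrow> nat" where
  "bae_eliminated K \<beta> T tb eb Y n = snd (snd (bae_run K \<beta> T tb eb Y T)) n"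

definition outcome_space :: "nat \<Rightarrow> real \<Rightarrow> (nat \<Rightarrow> real) \<Rightarrow> nat \<Rightarrow> (nat \<times> nat \<Rightarrow> real) measure" where
  "outcome_space K \<sigma>2 \<theta> T =
     PiM ({1..T} \<times> {1..K}) (\<lambda>(t, i). density lborel (normal_density (\<theta> i) (sqrt \<sigma>2)))"

definition bae_prob :: "nat \<Rightarrow> real \<Rightarrow> (nat \<Rightarrow> real) \<Rightarrow> (nat \<Rightarrow> real) \<Rightarrow> (nat list \<Rightarrow> nat set \<Rightarrow> nat)
    \<Rightarrow> (nat list \<Rightarrow> nat set \<Rightarrow> nat) \<Rightarrow> nat \<Rightarrow> nat \<Rightarrow> nat \<Rightarrow> real" where
  "bae_prob K \<sigma>2 \<theta> \<beta> tb eb Istar n T =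
     measure (outcome_space K \<sigma>2 \<theta> T)
       {Y \<in> space (outcome_space K \<sigma>2 \<theta> T). bae_eliminated K \<beta> T tb eb Y n = Istar}"

definition neg_log_rate :: "real \<Rightarrow> nat \<Rightarrow> ereal" where
  "neg_log_rate P T = (if P = 0 then \<infinity> else ereal (- ln P / real T))"

definition bae_w :: "nat \<Rightarrow> (nat \<Rightarrow> real) \<Rightarrow> nat \<Rightarrow> real" where
  "bae_w K \<beta> n = (\<Sum>k=n..K. \<beta> k / real k)"

definition Gamma :: "nat \<Rightarrow> real \<Rightarrow> (nat \<Rightarrow> real) \<Rightarrow> nat \<Rightarrow> nat \<Rightarrow> real" where
  "Gamma K \<sigma>2 \<theta> Istar n =
     Min ((\<lambda>J. Inf ((\<lambda>lam. \<Sum>i\<in>J. (lam i - \<theta> i)^2 / (2 * \<sigma>2))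
                     ` {lam :: nat \<Rightarrow> real. lam Istar \<le> Min (lam ` J)}))
          ` {J. J \<subseteq> {1..K} \<and> card J = n \<and> Istar \<in> J})"

end

theory Submission
  imports Defs
begin

text \<open>Unrolling a run of BAE, its eliminations form an injective map \<open>L\<close> from \<open>{2..K}\<close> to the
  arms, and the history is the one generated deterministically by \<open>L\<close>. Since BAE always pulls a
  least-pulled candidate, the candidates stay balanced within each phase, so at time \<open>T\<^sub>n\<close> every
  arm of the \<open>n\<close>-element candidate set \<open>J\<close> has been pulled at least \<open>w\<^sub>n T - 2K\<close> times. Hence
  \<open>{\<ell>\<^sub>n = I\<^sup>*}\<close> is covered by finitely many events "\<open>I\<^sup>*\<close> has the lowest empirical mean in \<open>J(L)\<close>".
  Weighting the empirical means by the Lagrange multipliers of the program defining \<open>\<Gamma>\<close>, each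
  such event makes a Gaussian linear form nonnegative, and the Chernoff bound gives probability at
  most \<open>exp (-(w\<^sub>n T - 2K) \<Gamma>\<^sub>\<theta>\<^sub>,\<^sub>n)\<close>. The number of maps and the \<open>2K\<close> only contribute \<open>O(1/T)\<close> to the
  rate.\<close>

section \<open>Chernoff bounds for Gaussian linear forms\<close>

lemma normal_density_mult_exp:
  assumes "\<sigma> > 0"
  shows "normal_density \<mu> \<sigma> x * exp (b * x)
       = exp (b * \<mu> + b\<^sup>2 * \<sigma>\<^sup>2 / 2) * normal_density (\<mu> + b * \<sigma>\<^sup>2) \<sigma> x"
proof -
  have "-(x - \<mu>)\<^sup>2 / (2 * \<sigma>\<^sup>2) + b * x = b * \<mu> + b\<^sup>2 * \<sigma>\<^sup>2 / 2 - (x - (\<mu> + b * \<sigma>\<^sup>2))\<^sup>2 / (2 * \<sigma>\<^sup>2)"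
    using assms by (simp add: field_simps power2_eq_square)
  then show ?thesis
    by (simp add: normal_density_def mult_exp_exp)
qed

lemma nn_integral_exp_normal:
  assumes "\<sigma> > 0"
  shows "(\<integral>\<^sup>+ x. exp (b * x) \<partial>density lborel (normal_density \<mu> \<sigma>))
       = ennreal (exp (b * \<mu> + b\<^sup>2 * \<sigma>\<^sup>2 / 2))"
proof -
  interpret shifted: prob_space "density lborel (normal_density (\<mu> + b * \<sigma>\<^sup>2) \<sigma>)"
    using assms by (rule prob_space_normal_density)
  have "(\<integral>\<^sup>+ x. exp (b * x) \<partial>density lborel (normal_density \<mu> \<sigma>))
      = (\<integral>\<^sup>+ x. ennreal (normal_density \<mu> \<sigma> x) * exp (b * x) \<partial>lborel)"
    by (rule nn_integral_density) auto
  also have "\<dots> = (\<integral>\<^sup>+ x. exp (b * \<mu> + b\<^sup>2 * \<sigma>\<^sup>2 / 2) * ennreal (normal_density (\<mu> + b * \<sigma>\<^sup>2) \<sigma> x) \<partial>lborel)"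
    by (intro nn_integral_cong)
       (simp add: normal_density_mult_exp[OF assms] ennreal_mult'[symmetric])
  also have "\<dots> = exp (b * \<mu> + b\<^sup>2 * \<sigma>\<^sup>2 / 2) * emeasure (density lborel (normal_density (\<mu> + b * \<sigma>\<^sup>2) \<sigma>)) UNIV"
    by (simp add: nn_integral_cmult emeasure_density)
  finally show ?thesis
    by (simp add: shifted.emeasure_space_1[simplified])
qed

lemma prob_space_outcome_space: "\<sigma>2 > 0 \<Longrightarrow> prob_space (outcome_space K \<sigma>2 \<theta> T)"
  unfolding outcome_space_def
  by (rule prob_space_PiM) (auto intro!: prob_space_normal_density split: prod.splits)

lemma borel_measurable_outcome_linear:
  "(\<lambda>Y. \<Sum>p\<in>{1..T}\<times>{1..K}. c p * Y p) \<in> borel_measurable (outcome_space K \<sigma>2 \<theta> T)"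
proof -
  have "(\<lambda>Y. Y p) \<in> borel_measurable (outcome_space K \<sigma>2 \<theta> T)" if "p \<in> {1..T}\<times>{1..K}" for p
    using measurable_component_singleton[OF that, of "\<lambda>(t, i). density lborel (normal_density (\<theta> i) (sqrt \<sigma>2))"]
    unfolding outcome_space_def by (cases p) (simp cong: measurable_cong_sets)
  then show ?thesis
    by (intro borel_measurable_sum borel_measurable_times borel_measurable_const)
qed

lemma nn_integral_exp_outcome_linear:
  assumes "\<sigma>2 > 0"
  shows "(\<integral>\<^sup>+ Y. exp (\<Sum>p\<in>{1..T}\<times>{1..K}. c p * Y p) \<partial>outcome_space K \<sigma>2 \<theta> T)
       = ennreal (exp (\<Sum>p\<in>{1..T}\<times>{1..K}. c p * \<theta> (snd p) + (c p)\<^sup>2 * \<sigma>2 / 2))"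
proof -
  define M where "M = (\<lambda>(t::nat, i::nat). density lborel (normal_density (\<theta> i) (sqrt \<sigma>2)))"
  have "prob_space (M p)" for p
    using assms by (cases p) (simp add: M_def prob_space_normal_density)
  then interpret product_sigma_finite M
    by (intro product_sigma_finite.intro prob_space_imp_sigma_finite)
  let ?I = "{1..T}\<times>{1..K}"
  have "(\<integral>\<^sup>+ Y. exp (\<Sum>p\<in>?I. c p * Y p) \<partial>PiM ?I M) = (\<integral>\<^sup>+ Y. (\<Prod>p\<in>?I. ennreal (exp (c p * Y p))) \<partial>PiM ?I M)"
    by (simp add: exp_sum prod_ennreal)
  also have "\<dots> = (\<Prod>p\<in>?I. \<integral>\<^sup>+ x. exp (c p * x) \<partial>M p)"
    by (rule product_nn_integral_prod) (auto simp: M_def split: prod.splits)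
  also have "\<dots> = (\<Prod>p\<in>?I. ennreal (exp (c p * \<theta> (snd p) + (c p)\<^sup>2 * \<sigma>2 / 2)))"
    using assms by (intro prod.cong refl) (auto simp: M_def nn_integral_exp_normal)
  also have "\<dots> = ennreal (exp (\<Sum>p\<in>?I. c p * \<theta> (snd p) + (c p)\<^sup>2 * \<sigma>2 / 2))"
    by (simp add: exp_sum prod_ennreal)
  finally show ?thesis
    unfolding outcome_space_def M_def .
qed

lemma emeasure_le_sum_nn_integral_cover:
  assumes "finite F" "\<And>f. f \<in> F \<Longrightarrow> g f \<in> borel_measurable M"
    and "\<And>x. x \<in> A \<Longrightarrow> \<exists>f\<in>F. 1 \<le> g f x"
  shows "emeasure M A \<le> (\<Sum>f\<in>F. \<integral>\<^sup>+ x. g f x \<partial>M)"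
proof (cases "A \<in> sets M")
  case True
  have "indicator A x \<le> (\<Sum>f\<in>F. g f x)" for x
  proof (cases "x \<in> A")
    case True
    then obtain f where "f \<in> F" "1 \<le> g f x"
      using assms(3) by blast
    then show ?thesis
      using True member_le_sum[of f F "\<lambda>f. g f x"] assms(1) by auto
  qed simp
  then have "emeasure M A \<le> (\<integral>\<^sup>+ x. (\<Sum>f\<in>F. g f x) \<partial>M)"
    using True by (simp add: nn_integral_mono flip: nn_integral_indicator)
  also have "\<dots> = (\<Sum>f\<in>F. \<integral>\<^sup>+ x. g f x \<partial>M)"
    using assms(2) by (rule nn_integral_sum)
  finally show ?thesis .
qed (simp add: emeasure_notin_sets)

lemma measure_outcome_space_le_card_exp:
  assumes "\<sigma>2 > 0" "finite F"
    and "\<And>Y. Y \<in> E \<Longrightarrow> \<exists>f\<in>F. 0 \<le> (\<Sum>p\<in>{1..T}\<times>{1..K}. c f p * Y p)"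
    and "\<And>f. f \<in> F \<Longrightarrow> (\<Sum>p\<in>{1..T}\<times>{1..K}. c f p * \<theta> (snd p) + (c f p)\<^sup>2 * \<sigma>2 / 2) \<le> - r"
  shows "measure (outcome_space K \<sigma>2 \<theta> T) E \<le> real (card F) * exp (- r)"
proof -
  let ?M = "outcome_space K \<sigma>2 \<theta> T"
  have "emeasure ?M E \<le> (\<Sum>f\<in>F. \<integral>\<^sup>+ Y. exp (\<Sum>p\<in>{1..T}\<times>{1..K}. c f p * Y p) \<partial>?M)"
    using assms(3) borel_measurable_outcome_linear
    by (intro emeasure_le_sum_nn_integral_cover[OF assms(2)]) auto
  also have "\<dots> \<le> (\<Sum>f\<in>F. ennreal (exp (- r)))"
    unfolding nn_integral_exp_outcome_linear[OF assms(1)] using assms(4) by (intro sum_mono ennreal_leI) simp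
  also have "\<dots> = ennreal (real (card F) * exp (- r))"
    by (simp add: ennreal_mult' ennreal_of_nat_eq_real_of_nat)
  finally show ?thesis
    by (simp add: measure_def enn2real_leI)
qed

section \<open>Dual weights for the exponent\<close>

definition Gamma_set :: "real \<Rightarrow> (nat \<Rightarrow> real) \<Rightarrow> nat \<Rightarrow> nat set \<Rightarrow> real" where
  "Gamma_set \<sigma>2 \<theta> Istar J = Inf ((\<lambda>lam. \<Sum>i\<in>J. (lam i - \<theta> i)^2 / (2 * \<sigma>2))
     ` {lam :: nat \<Rightarrow> real. lam Istar \<le> Min (lam ` J)})"

lemma Gamma_le_Gamma_set:
  assumes "J \<subseteq> {1..K}" "card J = n" "Istar \<in> J"
  shows "Gamma K \<sigma>2 \<theta> Istar n \<le> Gamma_set \<sigma>2 \<theta> Istar J"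
proof -
  have "finite {J. J \<subseteq> {1..K} \<and> card J = n \<and> Istar \<in> J}"
    by (rule finite_subset[of _ "Pow {1..K}"]) auto
  then show ?thesis
    unfolding Gamma_def Gamma_set_def using assms by (intro Min_le) auto
qed

lemma Gamma_set_le:
  assumes "\<sigma>2 > 0" "lam Istar \<le> Min (lam ` J)"
  shows "Gamma_set \<sigma>2 \<theta> Istar J \<le> (\<Sum>i\<in>J. (lam i - \<theta> i)\<^sup>2 / (2 * \<sigma>2))"
  unfolding Gamma_set_def
  by (rule cInf_lower) (use assms in \<open>auto intro!: bdd_belowI[of _ 0] sum_nonneg\<close>)

lemma Gamma_set_le_level:
  assumes "\<sigma>2 > 0" "finite J" "Istar \<in> J"
  shows "2 * \<sigma>2 * Gamma_set \<sigma>2 \<theta> Istar J \<le> (\<theta> Istar - c)\<^sup>2 + (\<Sum>i\<in>J - {Istar}. (max 0 (c - \<theta> i))\<^sup>2)"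
proof -
  define lam where "lam i = (if i = Istar then c else max c (\<theta> i))" for i
  have "lam Istar \<le> Min (lam ` J)"
    using assms(2,3) by (subst Min_ge_iff) (auto simp: lam_def)
  moreover have "(\<Sum>i\<in>J - {Istar}. (lam i - \<theta> i)\<^sup>2) = (\<Sum>i\<in>J - {Istar}. (max 0 (c - \<theta> i))\<^sup>2)"
    by (intro sum.cong) (auto simp: lam_def max_def)
  then have "(\<Sum>i\<in>J. (lam i - \<theta> i)\<^sup>2) = (\<theta> Istar - c)\<^sup>2 + (\<Sum>i\<in>J - {Istar}. (max 0 (c - \<theta> i))\<^sup>2)"
    using assms(2,3) by (simp add: lam_def power2_commute sum.remove)
  ultimately show ?thesis
    using Gamma_set_le[OF assms(1), of lam Istar J \<theta>] assms(1)
    by (simp add: field_simps flip: sum_divide_distrib)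
qed

lemma exists_water_level:
  fixes \<theta> :: "'a \<Rightarrow> real"
  assumes "finite A"
  obtains c where "c + (\<Sum>i\<in>A. max 0 (c - \<theta> i)) = v"
proof -
  define f where "f x = x + (\<Sum>i\<in>A. max 0 (x - \<theta> i))" for x
  define lo where "lo = Min (insert v (\<theta> ` A))"
  have lo: "lo \<le> v" "\<And>i. i \<in> A \<Longrightarrow> lo \<le> \<theta> i"
    unfolding lo_def using assms by auto
  moreover have "(\<Sum>i\<in>A. max 0 (lo - \<theta> i)) = 0"
    using lo(2) by (intro sum.neutral) auto
  ultimately have "f lo \<le> v"
    unfolding f_def by simp
  moreover have "v \<le> f v"
    unfolding f_def by (simp add: sum_nonneg)
  moreover have "continuous_on {lo..v} f"
    unfolding f_def by (intro continuous_intros)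
  ultimately obtain x where "f x = v"
    using IVT'[of f lo v v] lo(1) by auto
  then show ?thesis
    using that unfolding f_def by blast
qed

text \<open>The minimiser of the program defining \<open>Gamma_set\<close> lowers \<open>Istar\<close> and raises every arm
  below a common level \<open>c\<close> up to \<open>c\<close>; the amounts \<open>(c - \<theta> i)\<^sup>+\<close> are its Lagrange multipliers.\<close>

lemma Gamma_set_dual_weights:
  assumes "\<sigma>2 > 0" "finite J" "Istar \<in> J"
  obtains w :: "nat \<Rightarrow> real"
  where "\<And>i. i \<notin> J \<Longrightarrow> w i = 0" "\<And>i. i \<in> J - {Istar} \<Longrightarrow> 0 \<le> w i"
    "(\<Sum>i\<in>J. w i) = 0" "(\<Sum>i\<in>J. w i * \<theta> i) = - (\<Sum>i\<in>J. (w i)\<^sup>2)"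
    "2 * \<sigma>2 * Gamma_set \<sigma>2 \<theta> Istar J \<le> (\<Sum>i\<in>J. (w i)\<^sup>2)"
proof -
  define A where "A = J - {Istar}"
  have A: "finite A" "Istar \<notin> A" "J = insert Istar A"
    using assms unfolding A_def by auto
  obtain c where c: "c + (\<Sum>i\<in>A. max 0 (c - \<theta> i)) = \<theta> Istar"
    using exists_water_level[OF A(1)] by blast
  define a where "a i = max 0 (c - \<theta> i)" for i
  define S where "S = (\<Sum>i\<in>A. a i)"
  define Q where "Q = (\<Sum>i\<in>A. (a i)\<^sup>2)"
  define w where "w i = (if i = Istar then - S else if i \<in> A then a i else 0)" for i
  have S: "S = \<theta> Istar - c"
    using c unfolding S_def a_def by simp
  have sum_w: "(\<Sum>i\<in>J. f (w i) i) = f (- S) Istar + (\<Sum>i\<in>A. f (a i) i)" for f :: "real \<Rightarrow> nat \<Rightarrow> real"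
  proof -
    have "(\<Sum>i\<in>A. f (w i) i) = (\<Sum>i\<in>A. f (a i) i)"
      using A by (intro sum.cong) (auto simp: w_def)
    then show ?thesis
      using A by (simp add: w_def)
  qed
  have "a i * \<theta> i = a i * \<theta> Istar - (a i)\<^sup>2 - a i * S" for i
    unfolding S a_def by (simp add: max_def power2_eq_square algebra_simps)
  then have "(\<Sum>i\<in>A. a i * \<theta> i) = S * \<theta> Istar - Q - S * S"
    by (simp add: sum_subtractf S_def Q_def sum_distrib_right)
  then have mean: "(\<Sum>i\<in>J. w i * \<theta> i) = - (S\<^sup>2 + Q)"
    using sum_w[of "\<lambda>x i. x * \<theta> i"] by (simp add: power2_eq_square)
  have squares: "(\<Sum>i\<in>J. (w i)\<^sup>2) = S\<^sup>2 + Q"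
    using sum_w[of "\<lambda>x i. x\<^sup>2"] unfolding Q_def by simp
  have primal: "2 * \<sigma>2 * Gamma_set \<sigma>2 \<theta> Istar J \<le> S\<^sup>2 + Q"
    using Gamma_set_le_level[OF assms, of \<theta> c] unfolding S Q_def a_def A_def .
  show ?thesis
  proof (rule that[of w])
    show "w i = 0" if "i \<notin> J" for i
      using that A by (auto simp: w_def)
    show "0 \<le> w i" if "i \<in> J - {Istar}" for i
      using that by (auto simp: w_def a_def A_def)
    show "(\<Sum>i\<in>J. w i) = 0"
      using sum_w[of "\<lambda>x i. x"] by (simp add: S_def)
  qed (use mean squares primal in simp_all)
qed

section \<open>Empirical means as linear forms\<close>

text \<open>Unit \<open>t \<ge> 1\<close> is entry \<open>t - 1\<close> of a history, as in \<open>emp_mean\<close>.\<close>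

definition hist_coeff :: "nat list \<Rightarrow> (nat \<Rightarrow> real) \<Rightarrow> nat \<times> nat \<Rightarrow> real" where
  "hist_coeff h w = (\<lambda>(t, i).
     if 1 \<le> t \<and> t \<le> length h \<and> h ! (t - 1) = i then w i / real (cnt h i) else 0)"

lemma cnt_eq_card: "cnt h i = card {s. s < length h \<and> h ! s = i}"
  by (simp add: cnt_def length_filter_conv_card)

lemma sum_hist_coeff:
  assumes "length h \<le> T"
  shows "(\<Sum>p\<in>{1..T}\<times>{1..K}. hist_coeff h w p * f p)
       = (\<Sum>i\<in>{1..K}. w i / real (cnt h i) * (\<Sum>s | s < length h \<and> h ! s = i. f (Suc s, i)))"
proof -
  have units: "{t \<in> {1..T}. 1 \<le> t \<and> t \<le> length h \<and> h ! (t - 1) = i}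
             = Suc ` {s. s < length h \<and> h ! s = i}" for i
    using assms by (auto simp: image_iff) (metis Suc_pred' One_nat_def Suc_le_eq less_eq_Suc_le)
  have "(\<Sum>t\<in>{1..T}. hist_coeff h w (t, i) * f (t, i))
      = w i / real (cnt h i) * (\<Sum>s | s < length h \<and> h ! s = i. f (Suc s, i))" for i
  proof -
    have "(\<Sum>t\<in>{1..T}. hist_coeff h w (t, i) * f (t, i))
        = (\<Sum>t\<in>{1..T}. if 1 \<le> t \<and> t \<le> length h \<and> h ! (t - 1) = i
                          then w i / real (cnt h i) * f (t, i) else 0)"
      by (intro sum.cong) (auto simp: hist_coeff_def)
    also have "\<dots> = (\<Sum>t\<in>Suc ` {s. s < length h \<and> h ! s = i}. w i / real (cnt h i) * f (t, i))"
      by (simp only: units flip: sum.inter_filter[OF finite_atLeastAtMost])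
    finally show ?thesis
      by (simp add: sum.reindex sum_distrib_left)
  qed
  moreover have "(\<Sum>p\<in>{1..T}\<times>{1..K}. hist_coeff h w p * f p)
      = (\<Sum>i\<in>{1..K}. \<Sum>t\<in>{1..T}. hist_coeff h w (t, i) * f (t, i))"
    unfolding sum.cartesian_product' by (rule sum.swap)
  ultimately show ?thesis
    by simp
qed

lemma sum_hist_coeff_outcomes:
  assumes "length h \<le> T"
  shows "(\<Sum>p\<in>{1..T}\<times>{1..K}. hist_coeff h w p * Y p) = (\<Sum>i\<in>{1..K}. w i * emp_mean Y h i)"
  unfolding sum_hist_coeff[OF assms] by (intro sum.cong) (auto simp: emp_mean_def)

lemma sum_hist_coeff_means:
  assumes "length h \<le> T" "\<And>i. cnt h i = 0 \<Longrightarrow> w i = 0"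
  shows "(\<Sum>p\<in>{1..T}\<times>{1..K}. hist_coeff h w p * \<theta> (snd p)) = (\<Sum>i\<in>{1..K}. w i * \<theta> i)"
  unfolding sum_hist_coeff[OF assms(1)] using assms(2)
  by (intro sum.cong) (auto simp: cnt_eq_card)

lemma sum_hist_coeff_squares:
  assumes "length h \<le> T"
  shows "(\<Sum>p\<in>{1..T}\<times>{1..K}. (hist_coeff h w p)\<^sup>2) = (\<Sum>i\<in>{1..K}. (w i)\<^sup>2 / real (cnt h i))"
proof -
  have "(\<Sum>s | s < length h \<and> h ! s = i. hist_coeff h w (Suc s, i)) = w i" if "cnt h i \<noteq> 0" for i
    using that by (simp add: hist_coeff_def cnt_eq_card)
  then show ?thesis
    using sum_hist_coeff[OF assms, of w "hist_coeff h w"]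
    by (simp add: power2_eq_square) (intro sum.cong; auto)
qed

lemma sum_nonneg_at_min:
  assumes "finite J" "(\<Sum>i\<in>J. w i) = 0" "\<And>i. i \<in> J - {Istar} \<Longrightarrow> 0 \<le> w i"
    and "\<And>i. i \<in> J \<Longrightarrow> x Istar \<le> x i"
  shows "0 \<le> (\<Sum>i\<in>J. w i * (x i :: real))"
proof -
  have "0 \<le> (\<Sum>i\<in>J. w i * (x i - x Istar))"
  proof (intro sum_nonneg)
    fix i assume "i \<in> J"
    then show "0 \<le> w i * (x i - x Istar)"
      using assms(3)[of i] assms(4)[of i] by (cases "i = Istar") auto
  qed
  also have "\<dots> = (\<Sum>i\<in>J. w i * x i)"
    using assms(2) by (simp add: right_diff_distrib sum_subtractf flip: sum_distrib_right)
  finally show ?thesis .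
qed

lemma hist_coeff_exponent_le:
  assumes "length h \<le> T" "J \<subseteq> {1..K}" "m > 0" "\<And>i. i \<in> J \<Longrightarrow> m \<le> real (cnt h i)"
    and "\<And>i. i \<notin> J \<Longrightarrow> w i = 0" "\<sigma>2 \<ge> 0"
  shows "(\<Sum>p\<in>{1..T}\<times>{1..K}. s * hist_coeff h w p * \<theta> (snd p) + (s * hist_coeff h w p)\<^sup>2 * \<sigma>2 / 2)
    \<le> s * (\<Sum>i\<in>J. w i * \<theta> i) + s\<^sup>2 * \<sigma>2 / (2 * m) * (\<Sum>i\<in>J. (w i)\<^sup>2)"
proof -
  let ?I = "{1..T}\<times>{1..K}"
  have restrict: "(\<Sum>i\<in>{1..K}. g i) = (\<Sum>i\<in>J. g i)" if "\<And>i. i \<notin> J \<Longrightarrow> g i = 0" for g :: "nat \<Rightarrow> real"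
    using assms(2) that by (intro sum.mono_neutral_right) auto
  have "cnt h i = 0 \<Longrightarrow> w i = 0" for i
    using assms(3) assms(4)[of i] assms(5)[of i] by fastforce
  then have means: "(\<Sum>p\<in>?I. hist_coeff h w p * \<theta> (snd p)) = (\<Sum>i\<in>J. w i * \<theta> i)"
    using sum_hist_coeff_means[OF assms(1), where K = K and \<theta> = \<theta>] restrict[of "\<lambda>i. w i * \<theta> i"] assms(5)
    by simp
  have "(\<Sum>p\<in>?I. (hist_coeff h w p)\<^sup>2) = (\<Sum>i\<in>J. (w i)\<^sup>2 / real (cnt h i))"
    using sum_hist_coeff_squares[OF assms(1), where K = K and w = w]
      restrict[of "\<lambda>i. (w i)\<^sup>2 / real (cnt h i)"] assms(5) by simp
  also have "\<dots> \<le> (\<Sum>i\<in>J. (w i)\<^sup>2) / m"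
    unfolding sum_divide_distrib using assms(3,4)
    by (intro sum_mono divide_left_mono) (auto intro: mult_pos_pos less_le_trans)
  finally have squares: "(\<Sum>p\<in>?I. (hist_coeff h w p)\<^sup>2) * (s\<^sup>2 * \<sigma>2 / 2)
      \<le> (\<Sum>i\<in>J. (w i)\<^sup>2) / m * (s\<^sup>2 * \<sigma>2 / 2)"
    using assms(6) by (intro mult_right_mono) auto
  have "(\<Sum>p\<in>?I. s * hist_coeff h w p * \<theta> (snd p) + (s * hist_coeff h w p)\<^sup>2 * \<sigma>2 / 2)
      = (\<Sum>p\<in>?I. s * (hist_coeff h w p * \<theta> (snd p)) + (hist_coeff h w p)\<^sup>2 * (s\<^sup>2 * \<sigma>2 / 2))"
    by (intro sum.cong) (simp_all add: power_mult_distrib)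
  also have "\<dots> = s * (\<Sum>p\<in>?I. hist_coeff h w p * \<theta> (snd p)) + (\<Sum>p\<in>?I. (hist_coeff h w p)\<^sup>2) * (s\<^sup>2 * \<sigma>2 / 2)"
    by (simp add: sum.distrib sum_distrib_left sum_distrib_right)
  also have "\<dots> \<le> s * (\<Sum>i\<in>J. w i * \<theta> i) + (\<Sum>i\<in>J. (w i)\<^sup>2) / m * (s\<^sup>2 * \<sigma>2 / 2)"
    using means squares by simp
  finally show ?thesis
    by (simp add: field_simps)
qed

lemma min_mean_chernoff_coeffs:
  assumes "\<sigma>2 > 0" "length h \<le> T" "J \<subseteq> {1..K}" "Istar \<in> J"
    and "m > 0" "\<And>i. i \<in> J \<Longrightarrow> m \<le> real (cnt h i)"
  obtains c :: "nat \<times> nat \<Rightarrow> real"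
  where "\<And>Y. (\<forall>i\<in>J. emp_mean Y h Istar \<le> emp_mean Y h i) \<Longrightarrow> 0 \<le> (\<Sum>p\<in>{1..T}\<times>{1..K}. c p * Y p)"
    "(\<Sum>p\<in>{1..T}\<times>{1..K}. c p * \<theta> (snd p) + (c p)\<^sup>2 * \<sigma>2 / 2) \<le> - m * Gamma_set \<sigma>2 \<theta> Istar J"
proof -
  have J: "finite J"
    using assms(3) finite_subset by blast
  obtain w where w0: "\<And>i. i \<notin> J \<Longrightarrow> w i = 0" and w_nonneg: "\<And>i. i \<in> J - {Istar} \<Longrightarrow> 0 \<le> w i"
    and w_sum: "(\<Sum>i\<in>J. w i) = 0" and w_mean: "(\<Sum>i\<in>J. w i * \<theta> i) = - (\<Sum>i\<in>J. (w i)\<^sup>2)"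
    and w_primal: "2 * \<sigma>2 * Gamma_set \<sigma>2 \<theta> Istar J \<le> (\<Sum>i\<in>J. (w i)\<^sup>2)"
    using Gamma_set_dual_weights[OF assms(1) J assms(4)] by blast
  define s where "s = m / \<sigma>2"
  show ?thesis
  proof (rule that[of "\<lambda>p. s * hist_coeff h w p"])
    fix Y assume "\<forall>i\<in>J. emp_mean Y h Istar \<le> emp_mean Y h i"
    then have "0 \<le> (\<Sum>i\<in>J. w i * emp_mean Y h i)"
      using sum_nonneg_at_min[OF J w_sum w_nonneg] by blast
    also have "\<dots> = (\<Sum>i\<in>{1..K}. w i * emp_mean Y h i)"
      using assms(3) w0 by (intro sum.mono_neutral_left) auto
    also have "\<dots> = (\<Sum>p\<in>{1..T}\<times>{1..K}. hist_coeff h w p * Y p)"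
      using sum_hist_coeff_outcomes[OF assms(2)] by simp
    finally have "0 \<le> s * (\<Sum>p\<in>{1..T}\<times>{1..K}. hist_coeff h w p * Y p)"
      using assms(1,5) by (simp add: s_def)
    then show "0 \<le> (\<Sum>p\<in>{1..T}\<times>{1..K}. s * hist_coeff h w p * Y p)"
      by (simp add: mult.assoc sum_distrib_left)
  next
    have "(\<Sum>p\<in>{1..T}\<times>{1..K}. s * hist_coeff h w p * \<theta> (snd p) + (s * hist_coeff h w p)\<^sup>2 * \<sigma>2 / 2)
        \<le> - s * (\<Sum>i\<in>J. (w i)\<^sup>2) + s\<^sup>2 * \<sigma>2 / (2 * m) * (\<Sum>i\<in>J. (w i)\<^sup>2)"
      using hist_coeff_exponent_le[where w = w and s = s and \<theta> = \<theta>, OF assms(2,3,5,6) w0 less_imp_le[OF assms(1)]] w_mean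
      by simp
    also have "\<dots> = - m * ((\<Sum>i\<in>J. (w i)\<^sup>2) / (2 * \<sigma>2))"
      using assms(1,5) by (simp add: s_def field_simps power2_eq_square)
    also have "\<dots> \<le> - m * Gamma_set \<sigma>2 \<theta> Istar J"
      using assms(1,5) w_primal by (simp add: field_simps)
    finally show "(\<Sum>p\<in>{1..T}\<times>{1..K}. s * hist_coeff h w p * \<theta> (snd p) + (s * hist_coeff h w p)\<^sup>2 * \<sigma>2 / 2)
        \<le> - m * Gamma_set \<sigma>2 \<theta> Istar J" .
  qed
qed

section \<open>BAE with a fixed elimination schedule\<close>

lemma cnt_append_single [simp]: "cnt (h @ [a]) i = cnt h i + (if a = i then 1 else 0)"
  by (simp add: cnt_def)

lemma card_Diff_image_ge: "finite A \<Longrightarrow> card B - card A \<le> card (B - f ` A)"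
  using diff_card_le_card_Diff[of "f ` A" B] card_image_le[of A f] by simp

lemma valid_tiebreak_argmin:
  assumes "valid_tiebreak f" "finite C" "C \<noteq> {}"
  shows "f h {i \<in> C. g i = Min (g ` C)} \<in> {i \<in> C. g i = Min (g ` C)}"
proof -
  have "Min (g ` C) \<in> g ` C"
    using assms(2,3) by simp
  then have "{i \<in> C. g i = Min (g ` C)} \<noteq> {}"
    by force
  moreover have "finite {i \<in> C. g i = Min (g ` C)}"
    using assms(2) by simp
  ultimately show ?thesis
    using assms(1) unfolding valid_tiebreak_def by blast
qed

abbreviation least_pulled :: "nat list \<Rightarrow> nat set \<Rightarrow> nat set" where
  "least_pulled h C \<equiv> {i \<in> C. cnt h i = Min (cnt h ` C)}"

text \<open>Run BAE with the eliminations fixed in advance: \<open>L k\<close> is the arm removed from the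
  \<open>k\<close>-element candidate set at time \<open>bae_time K \<beta> T k\<close>. The resulting history does not depend
  on the outcomes.\<close>

definition sched_cands :: "nat \<Rightarrow> (nat \<Rightarrow> real) \<Rightarrow> nat \<Rightarrow> (nat \<Rightarrow> nat) \<Rightarrow> nat \<Rightarrow> nat set" where
  "sched_cands K \<beta> T L t = {1..K} - L ` {k \<in> {2..K}. bae_time K \<beta> T k \<le> t}"

primrec sched_hist :: "nat \<Rightarrow> (nat \<Rightarrow> real) \<Rightarrow> nat \<Rightarrow> (nat list \<Rightarrow> nat set \<Rightarrow> nat) \<Rightarrow> (nat \<Rightarrow> nat)
    \<Rightarrow> nat \<Rightarrow> nat list" where
  "sched_hist K \<beta> T tb L 0 = []"
| "sched_hist K \<beta> T tb L (Suc t) = sched_hist K \<beta> T tb L t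
     @ [tb (sched_hist K \<beta> T tb L t) (least_pulled (sched_hist K \<beta> T tb L t) (sched_cands K \<beta> T L t))]"

locale bae_schedule =
  fixes K :: nat and \<beta> :: "nat \<Rightarrow> real" and T :: nat and tb :: "nat list \<Rightarrow> nat set \<Rightarrow> nat"
  assumes K_ge_2: "K \<ge> 2" and beta_nonneg: "\<forall>k\<in>{2..K}. \<beta> k \<ge> 0"
    and beta_sum: "(\<Sum>k=2..K. \<beta> k) = 1" and valid_tb: "valid_tiebreak tb"
begin

abbreviation "T_elim k \<equiv> bae_time K \<beta> T k"
abbreviation "cands L t \<equiv> sched_cands K \<beta> T L t"
abbreviation "hist L t \<equiv> sched_hist K \<beta> T tb L t"

lemma T_elim_antimono:
  assumes "2 \<le> j" "j \<le> k"
  shows "T_elim k \<le> T_elim j"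
proof -
  have "(\<Sum>i=k..K. \<beta> i) \<le> (\<Sum>i=j..K. \<beta> i)"
    using assms beta_nonneg by (intro sum_mono2) auto
  then show ?thesis
    unfolding bae_time_def by (intro nat_mono round_mono mult_right_mono) auto
qed

lemma T_elim_2: "T_elim 2 = T"
  unfolding bae_time_def using beta_sum by simp

lemma T_elim_le: "2 \<le> k \<Longrightarrow> T_elim k \<le> T"
  using T_elim_antimono[of 2 k] T_elim_2 by simp

lemma T_elim_round:
  assumes "2 \<le> k"
  shows "\<bar>real (T_elim k) - (\<Sum>i=k..K. \<beta> i) * real T\<bar> \<le> 1 / 2"
proof -
  have "0 \<le> (\<Sum>i=k..K. \<beta> i) * real T"
    using assms beta_nonneg by (intro mult_nonneg_nonneg sum_nonneg) auto
  then have "real (T_elim k) = of_int (round ((\<Sum>i=k..K. \<beta> i) * real T))"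
    unfolding bae_time_def by (metis of_int_of_nat_eq of_nat_nat round_mono round_0)
  then show ?thesis
    using of_int_round_abs_le[of "(\<Sum>i=k..K. \<beta> i) * real T"] by simp
qed

lemma cands_antimono: "s \<le> t \<Longrightarrow> cands L t \<subseteq> cands L s"
  unfolding sched_cands_def by auto

lemma finite_cands: "finite (cands L t)"
  unfolding sched_cands_def by auto

lemma cands_nonempty: "cands L t \<noteq> {}"
proof -
  have "card {k \<in> {2..K}. T_elim k \<le> t} \<le> card {2..K}"
    by (intro card_mono) auto
  then have "1 \<le> card (cands L t)"
    using card_Diff_image_ge[of "{k \<in> {2..K}. T_elim k \<le> t}" "{1..K}" L] K_ge_2
    unfolding sched_cands_def by simp
  then show ?thesis
    by auto
qed

lemma hist_SucE:
  obtains a where "hist L (Suc t) = hist L t @ [a]" "a \<in> cands L t"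
    "\<And>i. i \<in> cands L t \<Longrightarrow> cnt (hist L t) a \<le> cnt (hist L t) i"
proof -
  let ?a = "tb (hist L t) (least_pulled (hist L t) (cands L t))"
  have "?a \<in> least_pulled (hist L t) (cands L t)"
    using valid_tiebreak_argmin[OF valid_tb finite_cands cands_nonempty] .
  then show ?thesis
    using that[of ?a] finite_cands by simp
qed

lemma length_hist [simp]: "length (hist L t) = t"
  by (induction t) auto

lemma cnt_hist_Suc_balanced_step:
  assumes "i \<in> cands L t" "j \<in> cands L t" "cnt (hist L t) i \<le> cnt (hist L t) j + 1"
  shows "cnt (hist L (Suc t)) i \<le> cnt (hist L (Suc t)) j + 1"
proof -
  obtain a where "hist L (Suc t) = hist L t @ [a]"
    "\<And>i. i \<in> cands L t \<Longrightarrow> cnt (hist L t) a \<le> cnt (hist L t) i"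
    using hist_SucE by metis
  then show ?thesis
    using assms by fastforce
qed

lemma cnt_hist_balanced: "i \<in> cands L t \<Longrightarrow> j \<in> cands L t \<Longrightarrow> cnt (hist L t) i \<le> cnt (hist L t) j + 1"
proof (induction t arbitrary: i j)
  case (Suc t)
  then have "i \<in> cands L t" "j \<in> cands L t"
    using cands_antimono[of t "Suc t" L] by auto
  then show ?case
    using Suc.IH by (intro cnt_hist_Suc_balanced_step) auto
qed (simp add: cnt_def)

lemma cnt_hist_Suc_balanced:
  "i \<in> cands L t \<Longrightarrow> j \<in> cands L t \<Longrightarrow> cnt (hist L (Suc t)) i \<le> cnt (hist L (Suc t)) j + 1"
  by (intro cnt_hist_Suc_balanced_step cnt_hist_balanced)

lemma sum_cnt_hist_phase:
  assumes "t1 \<le> t2" "\<And>s. t1 \<le> s \<Longrightarrow> s < t2 \<Longrightarrow> cands L s = C"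
  shows "(\<Sum>j\<in>C. cnt (hist L t2) j) = (\<Sum>j\<in>C. cnt (hist L t1) j) + (t2 - t1)"
  using assms
proof (induction t2)
  case (Suc t)
  show ?case
  proof (cases "t1 = Suc t")
    case False
    then have "t1 \<le> t" "cands L t = C"
      using Suc.prems by auto
    moreover obtain a where "hist L (Suc t) = hist L t @ [a]" "a \<in> cands L t"
      using hist_SucE by metis
    ultimately show ?thesis
      using Suc finite_cands[of L t] by (simp add: sum.distrib Suc_diff_le)
  qed simp
qed simp

lemma cnt_hist_phase_ge:
  assumes "t1 \<le> t2" "\<And>s. t1 \<le> s \<Longrightarrow> s < t2 \<Longrightarrow> cands L s = C" "card C = k" "k > 0"
    and "\<And>j. j \<in> C \<Longrightarrow> u \<le> real (cnt (hist L t1) j)" and "i \<in> C"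
  shows "u + real (t2 - t1) / real k - 1 \<le> real (cnt (hist L t2) i)"
proof (cases "t1 = t2")
  case False
  then obtain t where t: "t2 = Suc t" "t1 \<le> t"
    using assms(1) by (cases t2) auto
  then have C: "cands L t = C"
    using assms(2) by simp
  have "real k * u + real (t2 - t1) \<le> (\<Sum>j\<in>C. real (cnt (hist L t1) j)) + real (t2 - t1)"
    using sum_mono[of C "\<lambda>_. u"] assms(3,5) by simp
  also have "\<dots> = (\<Sum>j\<in>C. real (cnt (hist L t2) j))"
    using sum_cnt_hist_phase[OF assms(1,2)] by (metis of_nat_add of_nat_sum)
  also have "\<dots> \<le> (\<Sum>j\<in>C. real (cnt (hist L t2) i) + 1)"
    using cnt_hist_Suc_balanced[of _ L t i] assms(6) C t(1) by (intro sum_mono) fastforce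
  also have "\<dots> = real k * (real (cnt (hist L t2) i) + 1)"
    using assms(3) by simp
  finally show ?thesis
    using assms(4) by (simp add: field_simps)
qed (use assms in force)

text \<open>Phase \<open>k\<close>, with \<open>k\<close> candidates, runs from \<open>phase_end (Suc k)\<close> to \<open>phase_end k\<close>; the first
  phase starts at \<open>phase_end (Suc K) = 0\<close>.\<close>

definition phase_end :: "nat \<Rightarrow> nat" where
  "phase_end k = (if k \<le> K then T_elim k else 0)"

definition phase_cands :: "(nat \<Rightarrow> nat) \<Rightarrow> nat \<Rightarrow> nat set" where
  "phase_cands L k = {1..K} - L ` {Suc k..K}"

text \<open>The values outside \<open>{2..K}\<close> are fixed to \<open>0\<close> so that there are only finitely many
  elimination maps.\<close>

definition elim_map :: "(nat \<Rightarrow> nat) \<Rightarrow> bool" where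
  "elim_map L \<longleftrightarrow> inj_on L {2..K} \<and> L ` {2..K} \<subseteq> {1..K} \<and> (\<forall>k. k \<notin> {2..K} \<longrightarrow> L k = 0)"

lemma phase_end_antimono: "2 \<le> k \<Longrightarrow> phase_end (Suc k) \<le> phase_end k"
  unfolding phase_end_def using T_elim_antimono[of k "Suc k"] by auto

lemma cands_phase:
  assumes "2 \<le> k" "k \<le> K" "phase_end (Suc k) \<le> s" "s < T_elim k"
  shows "cands L s = phase_cands L k"
proof -
  have "{k' \<in> {2..K}. T_elim k' \<le> s} = {Suc k..K}"
  proof (intro equalityI subsetI)
    fix x assume x: "x \<in> {k' \<in> {2..K}. T_elim k' \<le> s}"
    show "x \<in> {Suc k..K}"
    proof (rule ccontr)
      assume "x \<notin> {Suc k..K}"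
      then show False
        using x assms(4) T_elim_antimono[of x k] by auto
    qed
  next
    fix x assume "x \<in> {Suc k..K}"
    then show "x \<in> {k' \<in> {2..K}. T_elim k' \<le> s}"
      using assms T_elim_antimono[of "Suc k" x] unfolding phase_end_def by auto
  qed
  then show ?thesis
    unfolding sched_cands_def phase_cands_def by simp
qed

lemma card_phase_cands:
  assumes "elim_map L" "1 \<le> k" "k \<le> K"
  shows "card (phase_cands L k) = k"
proof -
  have "inj_on L {Suc k..K}" "L ` {Suc k..K} \<subseteq> {1..K}"
    using assms unfolding elim_map_def by (auto intro: inj_on_subset)
  then show ?thesis
    unfolding phase_cands_def using assms(3) by (simp add: card_Diff_subset card_image)
qed

lemma phase_cands_cong: "(\<And>k. k \<in> {Suc n..K} \<Longrightarrow> L k = L' k) \<Longrightarrow> phase_cands L n = phase_cands L' n"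
  unfolding phase_cands_def by (metis image_cong)

lemma phase_length_ge:
  assumes "2 \<le> k" "k \<le> K"
  shows "\<beta> k * real T - 1 \<le> real (phase_end k - phase_end (Suc k))"
proof -
  have "\<beta> k * real T - 1 \<le> real (phase_end k) - real (phase_end (Suc k))"
  proof (cases "Suc k \<le> K")
    case True
    have "(\<Sum>i=k..K. \<beta> i) = \<beta> k + (\<Sum>i=Suc k..K. \<beta> i)"
      using assms(2) by (simp add: sum.atLeast_Suc_atMost)
    then show ?thesis
      using T_elim_round[of k, unfolded abs_le_iff] T_elim_round[of "Suc k", unfolded abs_le_iff]
        assms True
      unfolding phase_end_def by (simp add: algebra_simps)
  next
    case False
    then have "k = K"
      using assms(2) by simp
    then show ?thesis
      using T_elim_round[of k, unfolded abs_le_iff] assms unfolding phase_end_def by simp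
  qed
  then show ?thesis
    using phase_end_antimono[OF assms(1)] by (simp add: of_nat_diff)
qed

lemma phase_share_ge:
  assumes "2 \<le> k" "k \<le> K"
  shows "\<beta> k * real T / real k - 1 \<le> real (T_elim k - phase_end (Suc k)) / real k"
proof -
  have "\<beta> k * real T - 1 \<le> real (T_elim k - phase_end (Suc k))"
    using phase_length_ge[OF assms] assms unfolding phase_end_def[of k] by simp
  then have "(\<beta> k * real T - 1) / real k \<le> real (T_elim k - phase_end (Suc k)) / real k"
    by (simp add: divide_right_mono)
  moreover have "\<beta> k * real T / real k - 1 \<le> (\<beta> k * real T - 1) / real k"
    using assms by (simp add: diff_divide_distrib)
  ultimately show ?thesis
    by linarith
qed

lemma cnt_hist_phase_end_ge:
  assumes "elim_map L" "2 \<le> k" "k \<le> Suc K" "i \<in> phase_cands L k"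
  shows "(\<Sum>j=k..K. \<beta> j * real T / real j - 2) \<le> real (cnt (hist L (phase_end k)) i)"
  using assms(2-4)
proof (induction "Suc K - k" arbitrary: k i)
  case 0
  then show ?case
    by simp
next
  case (Suc d)
  then have k: "2 \<le> k" "k \<le> K"
    by auto
  let ?u = "(\<Sum>j=Suc k..K. \<beta> j * real T / real j - 2)"
  have "?u + real (T_elim k - phase_end (Suc k)) / real k - 1 \<le> real (cnt (hist L (T_elim k)) i)"
  proof (rule cnt_hist_phase_ge)
    show "phase_end (Suc k) \<le> T_elim k"
      using phase_end_antimono[of k] k unfolding phase_end_def by auto
    show "cands L s = phase_cands L k" if "phase_end (Suc k) \<le> s" "s < T_elim k" for s
      using cands_phase k that by blast
    show "card (phase_cands L k) = k"
      using card_phase_cands assms(1) k by auto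
    have "phase_cands L k \<subseteq> phase_cands L (Suc k)"
      unfolding phase_cands_def by auto
    then show "?u \<le> real (cnt (hist L (phase_end (Suc k))) j)" if "j \<in> phase_cands L k" for j
      using Suc.hyps(1)[of "Suc k" j] Suc.hyps(2) k that by auto
  qed (use k Suc.prems in auto)
  moreover have "\<beta> k * real T / real k - 1 \<le> real (T_elim k - phase_end (Suc k)) / real k"
    by (rule phase_share_ge[OF k])
  moreover have "(\<Sum>j=k..K. \<beta> j * real T / real j - 2) = \<beta> k * real T / real k - 2 + ?u"
    using k by (simp add: sum.atLeast_Suc_atMost)
  ultimately show ?case
    using k unfolding phase_end_def by simp
qed

lemma cnt_hist_T_elim_ge:
  assumes "elim_map L" "n \<in> {2..K}" "i \<in> phase_cands L n"
  shows "bae_w K \<beta> n * real T - 2 * real K \<le> real (cnt (hist L (T_elim n)) i)"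
proof -
  have "(\<Sum>j=n..K. \<beta> j * real T / real j - 2) = bae_w K \<beta> n * real T - 2 * real (Suc K - n)"
    unfolding bae_w_def by (simp add: sum_subtractf sum_distrib_right)
  then show ?thesis
    using cnt_hist_phase_end_ge[OF assms(1) _ _ assms(3)] assms(2) unfolding phase_end_def by simp
qed

lemma sched_hist_cong:
  "(\<And>k. k \<in> {2..K} \<Longrightarrow> T_elim k < t \<Longrightarrow> L k = L' k) \<Longrightarrow> hist L t = hist L' t"
proof (induction t)
  case (Suc t)
  then have "cands L t = cands L' t"
    unfolding sched_cands_def by (auto simp: image_def)
  then show ?case
    using Suc by simp
qed simp

section \<open>Every run of BAE follows an elimination schedule\<close>

definition elim_inv :: "nat set \<Rightarrow> nat set \<Rightarrow> (nat \<Rightarrow> nat) \<Rightarrow> bool" where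
  "elim_inv D C L \<longleftrightarrow> C = {1..K} - L ` D \<and> (\<forall>k. k \<notin> D \<longrightarrow> L k = 0) \<and> inj_on L D \<and> L ` D \<subseteq> {1..K}"

lemma elim_inv_insert:
  assumes "elim_inv D C L" "j \<notin> D" "l \<in> C"
  shows "elim_inv (insert j D) (C - {l}) (L(j := l))"
proof -
  have "L(j := l) ` D = L ` D"
    using assms(2) by (auto simp: image_def)
  then show ?thesis
    using assms unfolding elim_inv_def by (auto simp: inj_on_def)
qed

definition elim_done :: "nat \<Rightarrow> nat \<Rightarrow> nat set" where
  "elim_done t j = {k \<in> {2..K}. T_elim k < t \<or> (j \<le> k \<and> T_elim k = t)}"

lemma elim_done_Suc:
  assumes "2 \<le> j" "j \<le> K" "T_elim j = t"
  shows "elim_done t (Suc j) = {Suc j..K}"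
proof (intro equalityI subsetI)
  fix k assume "k \<in> elim_done t (Suc j)"
  then show "k \<in> {Suc j..K}"
    using T_elim_antimono[of k j] assms unfolding elim_done_def by (cases "k \<le> j") auto
next
  fix k assume "k \<in> {Suc j..K}"
  then show "k \<in> elim_done t (Suc j)"
    using T_elim_antimono[of j k] assms unfolding elim_done_def by auto
qed

lemma elim_done_2: "elim_done t 2 = {k \<in> {2..K}. T_elim k \<le> t}"
  unfolding elim_done_def by auto

lemma elim_done_eq: "elim_done t j = elim_done t (Suc j) \<union> {k \<in> {2..K}. k = j \<and> T_elim k = t}"
  unfolding elim_done_def by (auto simp: le_less Suc_le_eq)

lemma elim_inv_phase_cands:
  assumes "elim_inv {Suc j..K} C L" "2 \<le> j" "j \<le> K"
  shows "C = phase_cands L j" "card C \<ge> 2"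
proof -
  show C: "C = phase_cands L j"
    using assms(1) unfolding elim_inv_def phase_cands_def by simp
  show "card C \<ge> 2"
    using card_Diff_image_ge[of "{Suc j..K}" "{1..K}" L] assms(2,3) unfolding C phase_cands_def by simp
qed

end

abbreviation lowest_mean :: "(nat \<times> nat \<Rightarrow> real) \<Rightarrow> nat list \<Rightarrow> nat set \<Rightarrow> nat set" where
  "lowest_mean Y h C \<equiv> {i \<in> C. emp_mean Y h i = Min (emp_mean Y h ` C)}"

locale bae_run_analysis = bae_schedule +
  fixes eb :: "nat list \<Rightarrow> nat set \<Rightarrow> nat" and Y :: "nat \<times> nat \<Rightarrow> real"
  assumes valid_eb: "valid_tiebreak eb"
begin

abbreviation "elim_arm h C \<equiv> eb h (lowest_mean Y h C)"

definition elim_step :: "nat \<Rightarrow> bae_state \<Rightarrow> nat \<Rightarrow> bae_state" where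
  "elim_step t = (\<lambda>(h, C, L) n.
     if T_elim n = t then (let l = elim_arm h C in (h, C - {l}, L(n := l))) else (h, C, L))"

lemma bae_elim_eq_foldl: "bae_elim K \<beta> T eb Y t st = foldl (elim_step t) st (rev [2..<Suc K])"
  unfolding bae_elim_def elim_step_def ..

lemma elim_step_simp:
  "elim_step t (h, C, L) n
     = (if T_elim n = t then (h, C - {elim_arm h C}, L(n := elim_arm h C)) else (h, C, L))"
  unfolding elim_step_def by simp

lemma elim_arm_in: "finite C \<Longrightarrow> C \<noteq> {} \<Longrightarrow> elim_arm h C \<in> lowest_mean Y h C"
  by (rule valid_tiebreak_argmin[OF valid_eb])

text \<open>Invariant of the eliminations at time \<open>t\<close> once \<open>n = K, \<dots>, j\<close> have been processed, starting
  from history \<open>h\<close> and elimination map \<open>L\<^sub>0\<close>.\<close>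

definition elim_progress :: "nat \<Rightarrow> nat list \<Rightarrow> (nat \<Rightarrow> nat) \<Rightarrow> nat \<Rightarrow> bae_state \<Rightarrow> bool" where
  "elim_progress t h L\<^sub>0 j st \<longleftrightarrow> (case st of (h', C, L) \<Rightarrow> h' = h \<and> elim_inv (elim_done t j) C L
     \<and> (\<forall>k\<in>{j..K}. T_elim k = t \<longrightarrow> L k = elim_arm h (phase_cands L k))
     \<and> (\<forall>k. T_elim k < t \<longrightarrow> L k = L\<^sub>0 k))"

lemma elim_inv_elim_arm:
  assumes "2 \<le> j" "j \<le> K" "T_elim j = t" "elim_inv (elim_done t (Suc j)) C L"
  shows "elim_inv (elim_done t j) (C - {elim_arm h C}) (L(j := elim_arm h C))"
proof -
  have inv: "elim_inv {Suc j..K} C L"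
    using assms(4) elim_done_Suc[OF assms(1-3)] by simp
  then have "finite C" "C \<noteq> {}"
    using elim_inv_phase_cands(2)[OF inv assms(1,2)] by (auto intro: card_ge_0_finite)
  then have "elim_arm h C \<in> C"
    using elim_arm_in by blast
  moreover have "elim_done t j = insert j {Suc j..K}"
    using elim_done_eq[of t j] elim_done_Suc[OF assms(1-3)] assms by auto
  ultimately show ?thesis
    using elim_inv_insert[OF inv, of j] by simp
qed

lemma elim_progress_step:
  assumes "2 \<le> j" "j \<le> K" "elim_progress t h L\<^sub>0 (Suc j) (h, C, L)"
  shows "elim_progress t h L\<^sub>0 j (elim_step t (h, C, L) j)"
proof (cases "T_elim j = t")
  case True
  let ?l = "elim_arm h C"
  let ?L = "L(j := ?l)"
  have inv: "elim_inv (elim_done t (Suc j)) C L"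
    using assms(3) unfolding elim_progress_def by simp
  note C = elim_inv_phase_cands(1)[OF inv[unfolded elim_done_Suc[OF assms(1,2) True]] assms(1,2)]
  have inv': "elim_inv (elim_done t j) (C - {?l}) ?L"
    by (rule elim_inv_elim_arm[OF assms(1,2) True inv])
  have arms: "?L k = elim_arm h (phase_cands ?L k)" if "k \<in> {j..K}" "T_elim k = t" for k
  proof -
    have cong: "phase_cands ?L k = phase_cands L k"
      using that by (intro phase_cands_cong) auto
    show ?thesis
    proof (cases "k = j")
      case False
      then show ?thesis
        using assms(3) that cong unfolding elim_progress_def by auto
    qed (use C cong in simp)
  qed
  have "?L k = L\<^sub>0 k" if "T_elim k < t" for k
    using assms(3) True that unfolding elim_progress_def by auto
  moreover have "elim_step t (h, C, L) j = (h, C - {?l}, ?L)"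
    using True by (simp add: elim_step_simp)
  ultimately show ?thesis
    using inv' arms unfolding elim_progress_def by (simp only: prod.case) blast
next
  case False
  then have "elim_done t j = elim_done t (Suc j)"
    using elim_done_eq[of t j] by auto
  moreover have "k \<in> {Suc j..K}" if "k \<in> {j..K}" "T_elim k = t" for k
    using that False by (cases "k = j") auto
  moreover have "elim_step t (h, C, L) j = (h, C, L)"
    using False by (simp add: elim_step_simp)
  ultimately show ?thesis
    using assms(3) unfolding elim_progress_def by (simp only: prod.case) blast
qed

lemma elim_progress_foldl:
  assumes "elim_inv {k \<in> {2..K}. T_elim k < t} C L" "2 \<le> j" "j \<le> Suc K"
  shows "elim_progress t h L j (foldl (elim_step t) (h, C, L) (rev [j..<Suc K]))"
  using assms(2,3)
proof (induction "Suc K - j" arbitrary: j)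
  case 0
  then have "j = Suc K"
    by simp
  moreover have "elim_done t (Suc K) = {k \<in> {2..K}. T_elim k < t}"
    unfolding elim_done_def by auto
  ultimately show ?case
    using assms(1) unfolding elim_progress_def by simp
next
  case (Suc d)
  then have j: "2 \<le> j" "j \<le> K"
    by auto
  obtain h' C' L' where st: "foldl (elim_step t) (h, C, L) (rev [Suc j..<Suc K]) = (h', C', L')"
    by (metis prod_cases3)
  have "elim_progress t h L (Suc j) (h', C', L')"
    using Suc.hyps(1)[of "Suc j"] Suc.hyps(2) j st by simp
  moreover from this have "h' = h"
    unfolding elim_progress_def by simp
  moreover have "rev [j..<Suc K] = rev [Suc j..<Suc K] @ [j]"
    using j by (simp add: upt_conv_Cons)
  ultimately show ?case
    using elim_progress_step[OF j] st by simp
qed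

definition run_inv :: "nat \<Rightarrow> bae_state \<Rightarrow> bool" where
  "run_inv t st \<longleftrightarrow> (case st of (h, C, L) \<Rightarrow> elim_inv (elim_done t 2) C L \<and> h = hist L t
     \<and> (\<forall>k\<in>elim_done t 2. L k = elim_arm (hist L (T_elim k)) (phase_cands L k)))"

lemma run_inv_bae_elim:
  assumes "elim_inv {k \<in> {2..K}. T_elim k < t} C L" "h = hist L t"
    and "\<And>k. k \<in> {2..K} \<Longrightarrow> T_elim k < t \<Longrightarrow> L k = elim_arm (hist L (T_elim k)) (phase_cands L k)"
  shows "run_inv t (bae_elim K \<beta> T eb Y t (h, C, L))"
proof -
  obtain h' C' L' where st: "bae_elim K \<beta> T eb Y t (h, C, L) = (h', C', L')"
    by (metis prod_cases3)
  have "elim_progress t h L 2 (h', C', L')"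
    using elim_progress_foldl[OF assms(1), of 2 h] K_ge_2 st by (simp add: bae_elim_eq_foldl)
  then have h': "h' = h" and inv: "elim_inv (elim_done t 2) C' L'"
    and new: "\<And>k. k \<in> {2..K} \<Longrightarrow> T_elim k = t \<Longrightarrow> L' k = elim_arm h (phase_cands L' k)"
    and old: "\<And>k. T_elim k < t \<Longrightarrow> L' k = L k"
    unfolding elim_progress_def by auto
  have hist_eq: "hist L s = hist L' s" if "s \<le> t" for s
    using that old by (intro sched_hist_cong) auto
  have "L' k = elim_arm (hist L' (T_elim k)) (phase_cands L' k)" if k: "k \<in> elim_done t 2" for k
  proof (cases "T_elim k = t")
    case True
    then show ?thesis
      using new k hist_eq[of t] assms(2) unfolding elim_done_2 by auto
  next
    case False
    then have lt: "T_elim k < t" "k \<in> {2..K}"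
      using k unfolding elim_done_2 by auto
    have "phase_cands L k = phase_cands L' k"
    proof (rule phase_cands_cong)
      fix k' assume "k' \<in> {Suc k..K}"
      then show "L k' = L' k'"
        using old T_elim_antimono[of k k'] lt by fastforce
    qed
    then show ?thesis
      using assms(3) lt old hist_eq[of "T_elim k"] by simp
  qed
  then show ?thesis
    using st h' inv hist_eq[of t] assms(2) unfolding run_inv_def by simp
qed

lemma run_inv_bae_run: "run_inv t (bae_run K \<beta> T tb eb Y t)"
proof (induction t)
  case 0
  have "elim_inv {k \<in> {2..K}. T_elim k < 0} {1..K} (\<lambda>_. 0)"
    unfolding elim_inv_def by simp
  then show ?case
    using run_inv_bae_elim[of 0 "{1..K}" "\<lambda>_. 0" "[]"] by simp
next
  case (Suc t)
  obtain h C L where st: "bae_run K \<beta> T tb eb Y t = (h, C, L)"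
    by (metis prod_cases3)
  have elim_done_Suc_t: "elim_done t 2 = {k \<in> {2..K}. T_elim k < Suc t}"
    unfolding elim_done_2 by auto
  have inv: "elim_inv (elim_done t 2) C L" and h: "h = hist L t"
    and arms: "\<forall>k\<in>elim_done t 2. L k = elim_arm (hist L (T_elim k)) (phase_cands L k)"
    using Suc.IH unfolding st run_inv_def by auto
  have "C = cands L t"
    using inv unfolding elim_inv_def sched_cands_def elim_done_2 by simp
  then have "bae_run K \<beta> T tb eb Y (Suc t) = bae_elim K \<beta> T eb Y (Suc t) (hist L (Suc t), C, L)"
    using st h by simp
  then show ?case
    using run_inv_bae_elim[of "Suc t" C L] inv arms elim_done_Suc_t by simp
qed

lemma eliminated_best_imp:
  assumes "n \<in> {2..K}" "bae_eliminated K \<beta> T tb eb Y n = Istar"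
  shows "\<exists>L. elim_map L \<and> Istar \<in> phase_cands L n \<and>
    (\<forall>i\<in>phase_cands L n. emp_mean Y (hist L (T_elim n)) Istar \<le> emp_mean Y (hist L (T_elim n)) i)"
proof -
  obtain h C L where st: "bae_run K \<beta> T tb eb Y T = (h, C, L)"
    by (metis prod_cases3)
  have "elim_done T 2 = {2..K}"
    unfolding elim_done_2 using T_elim_le by auto
  then have inv: "elim_inv {2..K} C L"
    and arms: "\<forall>k\<in>{2..K}. L k = elim_arm (hist L (T_elim k)) (phase_cands L k)"
    using run_inv_bae_run[of T] unfolding st run_inv_def by simp_all
  have L: "elim_map L"
    using inv unfolding elim_inv_def elim_map_def by auto
  then have "card (phase_cands L n) = n"
    using card_phase_cands assms(1) by auto
  then have fin: "finite (phase_cands L n)" and "phase_cands L n \<noteq> {}"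
    using assms(1) by (auto intro: card_ge_0_finite)
  then have "elim_arm (hist L (T_elim n)) (phase_cands L n)
      \<in> lowest_mean Y (hist L (T_elim n)) (phase_cands L n)"
    by (rule elim_arm_in)
  moreover have "L n = Istar"
    using assms(2) st unfolding bae_eliminated_def by simp
  ultimately have "Istar \<in> lowest_mean Y (hist L (T_elim n)) (phase_cands L n)"
    using arms assms(1) by simp
  then show ?thesis
    using L fin by auto
qed

end

section \<open>The error bound and its rate\<close>

definition bounded_maps :: "nat \<Rightarrow> (nat \<Rightarrow> nat) set" where
  "bounded_maps K = {L. \<forall>k. (k \<in> {2..K} \<longrightarrow> L k \<in> {0..K}) \<and> (k \<notin> {2..K} \<longrightarrow> L k = 0)}"

lemma finite_bounded_maps: "finite (bounded_maps K)"
  unfolding bounded_maps_def by (rule finite_set_of_finite_funs) auto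

context bae_schedule
begin

lemma elim_maps_subset: "{L. elim_map L} \<subseteq> bounded_maps K"
  unfolding elim_map_def bounded_maps_def by fastforce

lemma schedule_chernoff_coeffs:
  assumes "\<sigma>2 > 0" "n \<in> {2..K}" "elim_map L" "Istar \<in> phase_cands L n"
    and "0 < bae_w K \<beta> n * real T - 2 * real K"
  obtains c where
    "\<And>Y. (\<forall>i\<in>phase_cands L n. emp_mean Y (hist L (T_elim n)) Istar \<le> emp_mean Y (hist L (T_elim n)) i)
       \<Longrightarrow> 0 \<le> (\<Sum>p\<in>{1..T}\<times>{1..K}. c p * Y p)"
    "(\<Sum>p\<in>{1..T}\<times>{1..K}. c p * \<theta> (snd p) + (c p)\<^sup>2 * \<sigma>2 / 2)
       \<le> - ((bae_w K \<beta> n * real T - 2 * real K) * Gamma K \<sigma>2 \<theta> Istar n)"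
proof -
  let ?m = "bae_w K \<beta> n * real T - 2 * real K"
  let ?J = "phase_cands L n"
  have J: "?J \<subseteq> {1..K}" "card ?J = n"
    using card_phase_cands assms(2,3) unfolding phase_cands_def by auto
  obtain c where event: "\<And>Y. (\<forall>i\<in>?J. emp_mean Y (hist L (T_elim n)) Istar \<le> emp_mean Y (hist L (T_elim n)) i)
       \<Longrightarrow> 0 \<le> (\<Sum>p\<in>{1..T}\<times>{1..K}. c p * Y p)"
    and exponent: "(\<Sum>p\<in>{1..T}\<times>{1..K}. c p * \<theta> (snd p) + (c p)\<^sup>2 * \<sigma>2 / 2) \<le> - ?m * Gamma_set \<sigma>2 \<theta> Istar ?J"
  proof (rule min_mean_chernoff_coeffs[where \<theta> = \<theta>])
    show "length (hist L (T_elim n)) \<le> T"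
      using T_elim_le assms(2) by simp
    show "?m \<le> real (cnt (hist L (T_elim n)) i)" if "i \<in> ?J" for i
      using cnt_hist_T_elim_ge assms(2,3) that by blast
  qed (use assms J in auto)
  have "Gamma K \<sigma>2 \<theta> Istar n \<le> Gamma_set \<sigma>2 \<theta> Istar ?J"
    using Gamma_le_Gamma_set J assms(4) by blast
  then have "?m * Gamma K \<sigma>2 \<theta> Istar n \<le> ?m * Gamma_set \<sigma>2 \<theta> Istar ?J"
    using assms(5) by (intro mult_left_mono) auto
  then have "- ?m * Gamma_set \<sigma>2 \<theta> Istar ?J \<le> - (?m * Gamma K \<sigma>2 \<theta> Istar n)"
    unfolding minus_mult_left[symmetric] neg_le_iff_le .
  then show ?thesis
    using that[OF event] exponent by simp
qed

lemma bae_prob_le: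
  assumes "\<sigma>2 > 0" "valid_tiebreak eb" "n \<in> {2..K}" "0 < bae_w K \<beta> n * real T - 2 * real K"
  shows "bae_prob K \<sigma>2 \<theta> \<beta> tb eb Istar n T
    \<le> real (card (bounded_maps K)) * exp (- (bae_w K \<beta> n * real T - 2 * real K) * Gamma K \<sigma>2 \<theta> Istar n)"
proof -
  let ?m = "bae_w K \<beta> n * real T - 2 * real K"
  let ?F = "{L. elim_map L \<and> Istar \<in> phase_cands L n}"
  define min_at where "min_at Y L \<longleftrightarrow>
    (\<forall>i\<in>phase_cands L n. emp_mean Y (hist L (T_elim n)) Istar \<le> emp_mean Y (hist L (T_elim n)) i)" for Y L
  define coeffs_for where "coeffs_for L c \<longleftrightarrow>
    (\<forall>Y. min_at Y L \<longrightarrow> 0 \<le> (\<Sum>p\<in>{1..T}\<times>{1..K}. c p * Y p))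
    \<and> (\<Sum>p\<in>{1..T}\<times>{1..K}. c p * \<theta> (snd p) + (c p)\<^sup>2 * \<sigma>2 / 2) \<le> - (?m * Gamma K \<sigma>2 \<theta> Istar n)" for L c
  have "\<exists>c. coeffs_for L c" if "L \<in> ?F" for L
  proof -
    from that have "elim_map L" "Istar \<in> phase_cands L n"
      by auto
    then show ?thesis
      using schedule_chernoff_coeffs[OF assms(1,3) _ _ assms(4), where \<theta> = \<theta>]
      unfolding coeffs_for_def min_at_def by blast
  qed
  then obtain c where c: "\<And>L. L \<in> ?F \<Longrightarrow> coeffs_for L (c L)"
    using bchoice[of ?F coeffs_for] by blast
  have F: "?F \<subseteq> bounded_maps K"
    using elim_maps_subset by blast
  then have "finite ?F"
    using finite_bounded_maps finite_subset by blast
  have run: "bae_run_analysis K \<beta> tb eb"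
    using assms(2) by (intro bae_run_analysis.intro bae_schedule_axioms bae_run_analysis_axioms.intro)
  have "bae_prob K \<sigma>2 \<theta> \<beta> tb eb Istar n T \<le> real (card ?F) * exp (- (?m * Gamma K \<sigma>2 \<theta> Istar n))"
    unfolding bae_prob_def
  proof (rule measure_outcome_space_le_card_exp[OF assms(1) \<open>finite ?F\<close>])
    fix Y assume "Y \<in> {Y \<in> space (outcome_space K \<sigma>2 \<theta> T). bae_eliminated K \<beta> T tb eb Y n = Istar}"
    then obtain L where "L \<in> ?F" "min_at Y L"
      using bae_run_analysis.eliminated_best_imp[OF run, where T = T and Y = Y, OF assms(3)]
      unfolding min_at_def by blast
    then show "\<exists>L\<in>?F. 0 \<le> (\<Sum>p\<in>{1..T}\<times>{1..K}. c L p * Y p)"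
      using c unfolding coeffs_for_def by blast
  qed (use c in \<open>simp only: coeffs_for_def mem_Collect_eq\<close>)
  also have "\<dots> \<le> real (card (bounded_maps K)) * exp (- (?m * Gamma K \<sigma>2 \<theta> Istar n))"
    using card_mono[OF finite_bounded_maps F] by (simp add: mult_right_mono)
  finally show ?thesis
    by (simp only: minus_mult_left)
qed

end

lemma neg_log_rate_nonneg: "0 \<le> P \<Longrightarrow> P \<le> 1 \<Longrightarrow> 0 \<le> neg_log_rate P T"
  by (simp add: neg_log_rate_def divide_nonpos_nonneg)

lemma neg_log_rate_ge:
  assumes "0 \<le> P" "P \<le> N * exp (- x * G)" "0 < T"
  shows "ereal ((x * G - ln N) / real T) \<le> neg_log_rate P T"
proof (cases "P = 0")
  case False
  then have "0 < P"
    using assms(1) by simp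
  moreover from this have "0 < N * exp (- x * G)"
    using assms(2) by linarith
  then have "0 < N"
    by (rule zero_less_mult_pos2) simp
  ultimately have "ln P \<le> ln (N * exp (- x * G))"
    using assms(2) by simp
  also have "\<dots> = ln N - x * G"
    using \<open>0 < N\<close> by (simp add: ln_mult)
  finally have "(x * G - ln N) / real T \<le> - ln P / real T"
    by (intro divide_right_mono) auto
  then show ?thesis
    using False by (simp add: neg_log_rate_def)
qed (simp add: neg_log_rate_def)

lemma eventually_neg_log_rate_ge:
  fixes P :: "nat \<Rightarrow> real"
  assumes "\<And>T. 0 \<le> P T" "a > 0"
    and "\<And>T. 0 < a * real T - b \<Longrightarrow> P T \<le> N * exp (- (a * real T - b) * G)"
  shows "\<forall>\<^sub>F T in sequentially. ereal (a * G - (b * G + ln N) / real T) \<le> neg_log_rate (P T) T"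
proof -
  obtain T\<^sub>0 :: nat where "max 0 b / a < real T\<^sub>0"
    using reals_Archimedean2 by blast
  then have T\<^sub>0: "max 0 b < a * real T\<^sub>0"
    using assms(2) by (simp add: pos_divide_less_eq mult.commute)
  show ?thesis
  proof (rule eventually_sequentiallyI[of T\<^sub>0])
    fix T assume "T\<^sub>0 \<le> T"
    then have "a * real T\<^sub>0 \<le> a * real T"
      using assms(2) by (intro mult_left_mono) auto
    then have "max 0 b < a * real T"
      using T\<^sub>0 by linarith
    then have "0 < T" "0 < a * real T - b"
      using assms(2) by (auto simp: zero_less_mult_iff)
    then have "ereal (((a * real T - b) * G - ln N) / real T) \<le> neg_log_rate (P T) T"
      by (intro neg_log_rate_ge assms(1,3))
    moreover have "((a * real T - b) * G - ln N) / real T = a * G - (b * G + ln N) / real T"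
      using \<open>0 < T\<close> by (simp add: field_simps)
    ultimately show "ereal (a * G - (b * G + ln N) / real T) \<le> neg_log_rate (P T) T"
      by simp
  qed
qed

lemma Liminf_neg_log_rate_ge:
  fixes P :: "nat \<Rightarrow> real"
  assumes "\<And>T. 0 \<le> P T" "\<And>T. P T \<le> 1" "0 \<le> a"
    and "\<And>T. 0 < a * real T - b \<Longrightarrow> P T \<le> N * exp (- (a * real T - b) * G)"
  shows "ereal (a * G) \<le> Liminf sequentially (\<lambda>T. neg_log_rate (P T) T)"
proof (cases "a = 0")
  case True
  have "ereal 0 \<le> Liminf sequentially (\<lambda>T. neg_log_rate (P T) T)"
    using assms(1,2) by (intro Liminf_bounded always_eventually allI)
      (simp add: neg_log_rate_nonneg flip: zero_ereal_def)
  then show ?thesis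
    using True by simp
next
  case False
  let ?c = "b * G + ln N"
  have "(\<lambda>T. ereal (a * G - ?c / real T)) \<longlonglongrightarrow> ereal (a * G)"
    using tendsto_diff[OF tendsto_const lim_const_over_n[of ?c]] by (intro tendsto_ereal) simp
  then have "ereal (a * G) = Liminf sequentially (\<lambda>T. ereal (a * G - ?c / real T))"
    by (rule lim_imp_Liminf[OF trivial_limit_sequentially, symmetric])
  also have "\<dots> \<le> Liminf sequentially (\<lambda>T. neg_log_rate (P T) T)"
    using False assms by (intro Liminf_mono eventually_neg_log_rate_ge) auto
  finally show ?thesis .
qed

theorem lemma4:
  fixes K :: nat and \<sigma>2 :: real and \<theta> :: "nat \<Rightarrow> real" and Istar :: nat
    and \<beta> :: "nat \<Rightarrow> real" and tb eb :: "nat list \<Rightarrow> nat set \<Rightarrow> nat" and n :: nat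
  assumes "K \<ge> 2" and "\<sigma>2 > 0"
    and "Istar \<in> {1..K}" and "\<forall>i\<in>{1..K}. i \<noteq> Istar \<longrightarrow> \<theta> i < \<theta> Istar"
    and "\<forall>k\<in>{2..K}. \<beta> k \<ge> 0" and "(\<Sum>k=2..K. \<beta> k) = 1"
    and "valid_tiebreak tb" and "valid_tiebreak eb"
    and "n \<in> {2..K}"
  shows "Liminf sequentially (\<lambda>T. neg_log_rate (bae_prob K \<sigma>2 \<theta> \<beta> tb eb Istar n T) T)
           \<ge> ereal (bae_w K \<beta> n * Gamma K \<sigma>2 \<theta> Istar n)"
proof (rule Liminf_neg_log_rate_ge)
  fix T
  interpret prob_space "outcome_space K \<sigma>2 \<theta> T"
    using assms(2) by (rule prob_space_outcome_space)
  show "0 \<le> bae_prob K \<sigma>2 \<theta> \<beta> tb eb Istar n T" "bae_prob K \<sigma>2 \<theta> \<beta> tb eb Istar n T \<le> 1"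
    unfolding bae_prob_def by simp_all
next
  show "0 \<le> bae_w K \<beta> n"
    unfolding bae_w_def using assms(5,9) by (intro sum_nonneg) auto
next
  fix T assume "0 < bae_w K \<beta> n * real T - 2 * real K"
  moreover have "bae_schedule K \<beta> tb"
    using assms by unfold_locales
  ultimately show "bae_prob K \<sigma>2 \<theta> \<beta> tb eb Istar n T \<le> real (card (bounded_maps K))
      * exp (- (bae_w K \<beta> n * real T - 2 * real K) * Gamma K \<sigma>2 \<theta> Istar n)"
    using bae_schedule.bae_prob_le assms(2,8,9) by blast
qed

end
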